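(* Let $\mathcal G$ be a doubly connected molecular graph, and let $\mathcal M_1,\mathcal M_2,\mathcal M_3$ be any three molecules of $\mathcal G$. Construct $\mathcal G_{new}$ from $\mathcal G$ by adding a new molecule $\mathcal M_{new}$, a diffusive edge $b_1$ joining $\mathcal M_{new}$ and $\mathcal M_1$, a blue solid edge $b_2$ joining $\mathcal M_{new}$ and $\mathcal M_2$, and a blue solid edge $b_3$ joining $\mathcal M_{new}$ and $\mathcal M_3$. Then the blue solid edges $b_2$ and $b_3$ are both redundant in $\mathcal G_{new}$.
   Context: A molecular graph is a finite multigraph whose vertices are called molecules and each of whose edges joins two distinct molecules and is either a diffusive edge or a blue solid edge (parallel edges are allowed). A molecular graph is doubly connected if there exist two disjoint sets of edges, $\mathcal B_{black}$ consisting only of diffusive edges and $\mathcal B_{blue}$ consisting only of blue solid or diffusive edges, such that each of $\mathcal B_{black}$ and $\mathcal B_{blue}$ contains a spanning tree of the set of all molecules. A blue solid edge $e$ of a doubly connected graph is redundant if the graph obtained by deleting $e$ is still doubly connected. *)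

theory Defs
  imports Main
begin

text \<open>Molecular graphs: a finite vertex set V (molecules), a finite edge set E,
  an endpoint map ends (each edge joins the two molecules ends e; orientation is
  irrelevant) and an edge kind.\<close>

datatype edge_kind = Diffusive | BlueSolid

definition molecular_graph ::
  "'v set \<Rightarrow> 'e set \<Rightarrow> ('e \<Rightarrow> 'v \<times> 'v) \<Rightarrow> ('e \<Rightarrow> edge_kind) \<Rightarrow> bool" where
  "molecular_graph V E ends kind \<longleftrightarrow>
     finite V \<and> finite E \<and>
     (\<forall>e\<in>E. fst (ends e) \<in> V \<and> snd (ends e) \<in> V \<and> fst (ends e) \<noteq> snd (ends e))"

definition edge_rel :: "('e \<Rightarrow> 'v \<times> 'v) \<Rightarrow> 'e set \<Rightarrow> ('v \<times> 'v) set" where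
  "edge_rel ends F = {(a, b). \<exists>e\<in>F. ends e = (a, b) \<or> ends e = (b, a)}"

definition spans_connected :: "'v set \<Rightarrow> ('e \<Rightarrow> 'v \<times> 'v) \<Rightarrow> 'e set \<Rightarrow> bool" where
  "spans_connected V ends F \<longleftrightarrow> (\<forall>u\<in>V. \<forall>v\<in>V. (u, v) \<in> (edge_rel ends F)\<^sup>*)"

definition spanning_tree :: "'v set \<Rightarrow> ('e \<Rightarrow> 'v \<times> 'v) \<Rightarrow> 'e set \<Rightarrow> bool" where
  "spanning_tree V ends T \<longleftrightarrow>
     spans_connected V ends T \<and> (\<forall>e\<in>T. \<not> spans_connected V ends (T - {e}))"

definition contains_spanning_tree :: "'v set \<Rightarrow> ('e \<Rightarrow> 'v \<times> 'v) \<Rightarrow> 'e set \<Rightarrow> bool" where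
  "contains_spanning_tree V ends F \<longleftrightarrow> (\<exists>T\<subseteq>F. spanning_tree V ends T)"

definition doubly_connected ::
  "'v set \<Rightarrow> 'e set \<Rightarrow> ('e \<Rightarrow> 'v \<times> 'v) \<Rightarrow> ('e \<Rightarrow> edge_kind) \<Rightarrow> bool" where
  "doubly_connected V E ends kind \<longleftrightarrow>
     (\<exists>Bblack Bblue. Bblack \<subseteq> E \<and> Bblue \<subseteq> E \<and> Bblack \<inter> Bblue = {} \<and>
        (\<forall>e\<in>Bblack. kind e = Diffusive) \<and>
        (\<forall>e\<in>Bblue. kind e = BlueSolid \<or> kind e = Diffusive) \<and>
        contains_spanning_tree V ends Bblack \<and> contains_spanning_tree V ends Bblue)"

definition redundant ::
  "'v set \<Rightarrow> 'e set \<Rightarrow> ('e \<Rightarrow> 'v \<times> 'v) \<Rightarrow> ('e \<Rightarrow> edge_kind) \<Rightarrow> 'e \<Rightarrow> bool" where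
  "redundant V E ends kind e \<longleftrightarrow>
     doubly_connected V E ends kind \<and> e \<in> E \<and> kind e = BlueSolid \<and>
     doubly_connected V (E - {e}) ends kind"

end

theory Submission
  imports Defs
begin

text \<open>A new molecule attached by a diffusive edge b and a further edge c can be absorbed
  into the two spanning structures of the old graph: b extends the black spanning set and
  c the blue one. Hence the old graph plus Mnew with any two of b1, b2, b3 including b1 is
  already doubly connected, so deleting b2 or b3 keeps the new graph doubly connected.
  Since edge sets are finite, containing a spanning tree is the same as being connected.\<close>

lemma edge_rel_mono: "F \<subseteq> G \<Longrightarrow> edge_rel ends F \<subseteq> edge_rel ends G"
  unfolding edge_rel_def by auto

lemma edge_rel_cong: "(\<And>e. e \<in> F \<Longrightarrow> ends e = ends' e) \<Longrightarrow> edge_rel ends F = edge_rel ends' F"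
  unfolding edge_rel_def by auto

lemma spans_connected_mono:
  "spans_connected V ends F \<Longrightarrow> F \<subseteq> G \<Longrightarrow> spans_connected V ends G"
  unfolding spans_connected_def by (meson edge_rel_mono rtrancl_mono subsetD)

lemma spans_connected_cong:
  "(\<And>e. e \<in> F \<Longrightarrow> ends e = ends' e) \<Longrightarrow>
    spans_connected V ends F \<longleftrightarrow> spans_connected V ends' F"
  unfolding spans_connected_def by (simp add: edge_rel_cong[of F ends ends'])

lemma spans_connected_insert_pendant:
  assumes "spans_connected V ends F" and "ends b = (x, m)" and "m \<in> V"
  shows "spans_connected (insert x V) ends (insert b F)"
  unfolding spans_connected_def
proof (intro ballI)
  let ?R = "(edge_rel ends (insert b F))\<^sup>*"
  have to_m: "(u, m) \<in> ?R" and from_m: "(m, u) \<in> ?R" if "u \<in> insert x V" for u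
  proof -
    have "(u, m) \<in> ?R \<and> (m, u) \<in> ?R"
    proof (cases "u = x")
      case True
      then show ?thesis using \<open>ends b = (x, m)\<close> unfolding edge_rel_def by auto
    next
      case False
      then have "(u, m) \<in> (edge_rel ends F)\<^sup>* \<and> (m, u) \<in> (edge_rel ends F)\<^sup>*"
        using assms(1,3) that unfolding spans_connected_def by auto
      moreover have "(edge_rel ends F)\<^sup>* \<subseteq> ?R"
        by (intro rtrancl_mono edge_rel_mono) blast
      ultimately show ?thesis by blast
    qed
    then show "(u, m) \<in> ?R" "(m, u) \<in> ?R" by blast+
  qed
  fix u v assume "u \<in> insert x V" "v \<in> insert x V"
  then show "(u, v) \<in> ?R" using to_m from_m rtrancl_trans by metis
qed

lemma contains_spanning_tree_imp_spans_connected: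
  "contains_spanning_tree V ends F \<Longrightarrow> spans_connected V ends F"
  unfolding contains_spanning_tree_def spanning_tree_def by (meson spans_connected_mono)

text \<open>A connected spanning subset of minimal cardinality is a spanning tree.\<close>
lemma spans_connected_imp_contains_spanning_tree:
  assumes "finite F" and "spans_connected V ends F"
  shows "contains_spanning_tree V ends F"
proof -
  let ?P = "\<lambda>T. T \<subseteq> F \<and> spans_connected V ends T"
  obtain T where T: "?P T" and min: "\<And>T'. ?P T' \<Longrightarrow> card T \<le> card T'"
    using ex_has_least_nat[of ?P F card] assms(2) by blast
  have "finite T" using T assms(1) finite_subset by blast
  have "\<not> spans_connected V ends (T - {e})" if "e \<in> T" for e
  proof
    assume "spans_connected V ends (T - {e})"
    then have "card T \<le> card (T - {e})" using min T by blast
    moreover have "card (T - {e}) < card T" using \<open>finite T\<close> that by (rule card_Diff1_less)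
    ultimately show False by simp
  qed
  then show ?thesis unfolding contains_spanning_tree_def spanning_tree_def using T by blast
qed

lemma contains_spanning_tree_iff_spans_connected:
  "finite F \<Longrightarrow> contains_spanning_tree V ends F \<longleftrightarrow> spans_connected V ends F"
  using contains_spanning_tree_imp_spans_connected spans_connected_imp_contains_spanning_tree
  by blast

lemma doubly_connected_mono:
  "doubly_connected V E ends kind \<Longrightarrow> E \<subseteq> E' \<Longrightarrow> doubly_connected V E' ends kind"
  unfolding doubly_connected_def by (meson order_trans)

lemma redundant_iff:
  "redundant V E ends kind e \<longleftrightarrow>
    e \<in> E \<and> kind e = BlueSolid \<and> doubly_connected V (E - {e}) ends kind"
  unfolding redundant_def using doubly_connected_mono[of V "E - {e}" ends kind E] by blast

lemma doubly_connected_insert_pendant: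
  assumes "finite E" and "doubly_connected V E ends kind"
    and "m1 \<in> V" and "m2 \<in> V"
    and "b \<notin> E" and "c \<notin> E" and "b \<noteq> c"
    and "ends' b = (x, m1)" and "ends' c = (x, m2)" and "kind' b = Diffusive"
    and agree: "\<And>e. e \<in> E \<Longrightarrow> ends' e = ends e \<and> kind' e = kind e"
  shows "doubly_connected (insert x V) (insert b (insert c E)) ends' kind'"
proof -
  obtain Bblack Bblue where sub: "Bblack \<subseteq> E" "Bblue \<subseteq> E" and "Bblack \<inter> Bblue = {}"
    and black: "\<forall>e\<in>Bblack. kind e = Diffusive"
    and "contains_spanning_tree V ends Bblack" "contains_spanning_tree V ends Bblue"
    using assms(2) unfolding doubly_connected_def by blast
  then have "spans_connected V ends' Bblack" "spans_connected V ends' Bblue"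
    using agree spans_connected_cong[of _ ends ends'] contains_spanning_tree_imp_spans_connected
    by (metis subsetD)+
  then have "spans_connected (insert x V) ends' (insert b Bblack)"
    "spans_connected (insert x V) ends' (insert c Bblue)"
    using assms(3,4,8,9) by (auto intro: spans_connected_insert_pendant)
  moreover have "finite (insert b Bblack)" "finite (insert c Bblue)"
    using assms(1) sub finite_subset by blast+
  ultimately have "contains_spanning_tree (insert x V) ends' (insert b Bblack)"
    "contains_spanning_tree (insert x V) ends' (insert c Bblue)"
    by (simp_all add: contains_spanning_tree_iff_spans_connected)
  moreover have "insert b Bblack \<inter> insert c Bblue = {}"
    using sub \<open>Bblack \<inter> Bblue = {}\<close> assms(5-7) by blast
  moreover have "\<forall>e\<in>insert b Bblack. kind' e = Diffusive"
    using sub black agree assms(10) by auto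
  moreover have "kind' e = BlueSolid \<or> kind' e = Diffusive" for e
    by (cases "kind' e") simp_all
  ultimately show ?thesis
    unfolding doubly_connected_def using sub
    by (intro exI[of _ "insert b Bblack"] exI[of _ "insert c Bblue"] conjI) auto
qed

theorem claimA6:
  fixes V :: "'v set" and E :: "'e set" and ends :: "'e \<Rightarrow> 'v \<times> 'v"
    and kind :: "'e \<Rightarrow> edge_kind"
    and M1 M2 M3 Mnew :: 'v and b1 b2 b3 :: 'e
  assumes "molecular_graph V E ends kind"
    and "doubly_connected V E ends kind"
    and "M1 \<in> V" and "M2 \<in> V" and "M3 \<in> V"
    and "Mnew \<notin> V"
    and "b1 \<notin> E" and "b2 \<notin> E" and "b3 \<notin> E"
    and "b1 \<noteq> b2" and "b1 \<noteq> b3" and "b2 \<noteq> b3"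
  shows "redundant (insert Mnew V) (E \<union> {b1, b2, b3})
            (ends(b1 := (Mnew, M1), b2 := (Mnew, M2), b3 := (Mnew, M3)))
            (kind(b1 := Diffusive, b2 := BlueSolid, b3 := BlueSolid)) b2
       \<and> redundant (insert Mnew V) (E \<union> {b1, b2, b3})
            (ends(b1 := (Mnew, M1), b2 := (Mnew, M2), b3 := (Mnew, M3)))
            (kind(b1 := Diffusive, b2 := BlueSolid, b3 := BlueSolid)) b3"
proof -
  let ?ends = "ends(b1 := (Mnew, M1), b2 := (Mnew, M2), b3 := (Mnew, M3))"
  let ?kind = "kind(b1 := Diffusive, b2 := BlueSolid, b3 := BlueSolid)"
  have "finite E" using assms(1) unfolding molecular_graph_def by blast
  have agree: "\<And>e. e \<in> E \<Longrightarrow> ?ends e = ends e \<and> ?kind e = kind e"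
    using assms(7-9) by auto
  have "doubly_connected (insert Mnew V) (insert b1 (insert b3 E)) ?ends ?kind"
    by (rule doubly_connected_insert_pendant[OF \<open>finite E\<close> assms(2,3,5,7,9,11) _ _ _ agree])
      (use assms(10-12) in auto)
  moreover have "E \<union> {b1, b2, b3} - {b2} = insert b1 (insert b3 E)"
    using assms(8,10,12) by auto
  moreover have "doubly_connected (insert Mnew V) (insert b1 (insert b2 E)) ?ends ?kind"
    by (rule doubly_connected_insert_pendant[OF \<open>finite E\<close> assms(2,3,4,7,8,10) _ _ _ agree])
      (use assms(10-12) in auto)
  moreover have "E \<union> {b1, b2, b3} - {b3} = insert b1 (insert b2 E)"
    using assms(9,11,12) by auto
  ultimately show ?thesis
    unfolding redundant_iff using assms(10-12) by auto
qed

end
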